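(* Let $S$ be a subcartesian space, $V\subseteq S$ an open subset, and let $n$ be the maximum of the structural dimensions $n_x$ over $x\in V$. If every nonempty open subset of $S$ contained in $V$ contains a point $x$ with $n_x=n$, then every point of $V$ is structurally regular.
   Context: A differential space (Sikorski) is a set $S$ with a family $C^\infty(S)$ of real functions, $S$ carrying the weakest topology making them continuous, closed under composition with smooth functions on $\mathbb{R}^k$, and such that functions locally agreeing with elements of $C^\infty(S)$ belong to $C^\infty(S)$; subsets inherit differential-space structures. A subcartesian space is a Hausdorff differential space each point of which has an open neighbourhood diffeomorphic to a differential subspace of some $\mathbb{R}^n$. The structural dimension $n_x$ of $S$ at $x$ is the smallest integer $n$ such that some open neighbourhood of $x$ in $S$ is diffeomorphic to a subset of $\mathbb{R}^n$. A point $x$ is structurally regular if there is a neighbourhood $U$ of $x$ with $n_y=n_x$ for all $y\in U$. *)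

theory Defs
  imports "HOL-Analysis.Analysis"
begin

text \<open>R^k is represented as the set of sequences nat => real vanishing from index k on,
  carrying the (product = Euclidean) topology.\<close>

definition Rn :: "nat \<Rightarrow> (nat \<Rightarrow> real) set" where
  "Rn k = {x. \<forall>i\<ge>k. x i = 0}"

definition pderiv_coord :: "nat \<Rightarrow> ((nat \<Rightarrow> real) \<Rightarrow> real) \<Rightarrow> (nat \<Rightarrow> real) \<Rightarrow> real" where
  "pderiv_coord i phi x = deriv (\<lambda>t. phi (x(i := t))) (x i)"

fun Ck_on :: "nat \<Rightarrow> nat \<Rightarrow> ((nat \<Rightarrow> real) \<Rightarrow> real) \<Rightarrow> bool" where
  "Ck_on 0 k phi = continuous_on (Rn k) phi"
| "Ck_on (Suc m) k phi =
     (continuous_on (Rn k) phi \<and>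
      (\<forall>i<k. \<forall>x\<in>Rn k. (\<lambda>t. phi (x(i := t))) differentiable (at (x i))) \<and>
      (\<forall>i<k. Ck_on m k (pderiv_coord i phi)))"

definition smooth_Rn :: "nat \<Rightarrow> ((nat \<Rightarrow> real) \<Rightarrow> real) \<Rightarrow> bool" where
  "smooth_Rn k phi = (\<forall>m. Ck_on m k phi)"

definition Rn_fns :: "nat \<Rightarrow> ((nat \<Rightarrow> real) \<Rightarrow> real) set" where
  "Rn_fns n = {f. smooth_Rn n f}"

definition dtop :: "'a set \<Rightarrow> ('a \<Rightarrow> real) set \<Rightarrow> 'a topology" where
  "dtop S F = topology_generated_by (insert S {S \<inter> f -` U | f U. f \<in> F \<and> open U})"

definition diff_space :: "'a set \<Rightarrow> ('a \<Rightarrow> real) set \<Rightarrow> bool" where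
  "diff_space S F \<longleftrightarrow>
     (\<forall>k fs phi. (\<forall>i<k. fs i \<in> F) \<and> smooth_Rn k phi \<longrightarrow>
          (\<lambda>x. phi (\<lambda>i. if i < k then fs i x else 0)) \<in> F) \<and>
     (\<forall>g. (\<forall>x\<in>S. \<exists>U f. openin (dtop S F) U \<and> x \<in> U \<and> f \<in> F \<and> (\<forall>y\<in>U. g y = f y))
          \<longrightarrow> g \<in> F)"

definition sub_fns :: "'a set \<Rightarrow> ('a \<Rightarrow> real) set \<Rightarrow> 'a set \<Rightarrow> ('a \<Rightarrow> real) set" where
  "sub_fns S F A = {g. \<forall>x\<in>A. \<exists>U f. openin (subtopology (dtop S F) A) U \<and> x \<in> U \<and> f \<in> F
                                   \<and> (\<forall>y\<in>U. g y = f y)}"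

definition smooth_map :: "'a set \<Rightarrow> ('a \<Rightarrow> real) set \<Rightarrow> 'b set \<Rightarrow> ('b \<Rightarrow> real) set
                          \<Rightarrow> ('a \<Rightarrow> 'b) \<Rightarrow> bool" where
  "smooth_map S F T G phi \<longleftrightarrow> phi ` S \<subseteq> T \<and> (\<forall>g\<in>G. g \<circ> phi \<in> F)"

definition diffeo :: "'a set \<Rightarrow> ('a \<Rightarrow> real) set \<Rightarrow> 'b set \<Rightarrow> ('b \<Rightarrow> real) set
                      \<Rightarrow> ('a \<Rightarrow> 'b) \<Rightarrow> bool" where
  "diffeo S F T G phi \<longleftrightarrow> bij_betw phi S T \<and> smooth_map S F T G phi
                          \<and> smooth_map T G S F (inv_into S phi)"

definition locally_embeds :: "'a set \<Rightarrow> ('a \<Rightarrow> real) set \<Rightarrow> 'a \<Rightarrow> nat \<Rightarrow> bool" where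
  "locally_embeds S F x n \<longleftrightarrow>
     (\<exists>U A phi. openin (dtop S F) U \<and> x \<in> U \<and> A \<subseteq> Rn n \<and>
                diffeo U (sub_fns S F U) A (sub_fns (Rn n) (Rn_fns n) A) phi)"

definition subcartesian :: "'a set \<Rightarrow> ('a \<Rightarrow> real) set \<Rightarrow> bool" where
  "subcartesian S F \<longleftrightarrow> diff_space S F \<and> Hausdorff_space (dtop S F) \<and>
                          (\<forall>x\<in>S. \<exists>n. locally_embeds S F x n)"

definition struct_dim :: "'a set \<Rightarrow> ('a \<Rightarrow> real) set \<Rightarrow> 'a \<Rightarrow> nat" where
  "struct_dim S F x = (LEAST n. locally_embeds S F x n)"

definition struct_regular :: "'a set \<Rightarrow> ('a \<Rightarrow> real) set \<Rightarrow> 'a \<Rightarrow> bool" where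
  "struct_regular S F x \<longleftrightarrow>
     (\<exists>U. openin (dtop S F) U \<and> x \<in> U \<and> (\<forall>y\<in>U. struct_dim S F y = struct_dim S F x))"

end

theory Submission
  imports Defs
begin

text \<open>The structural dimension is upper semicontinuous: a chart of dimension \<open>n\<^sub>x\<close> around
  \<open>x\<close> is also a chart around every point of its domain, so \<open>n\<^sub>y \<le> n\<^sub>x\<close> near \<open>x\<close>.
  For \<open>x \<in> V\<close> this chart domain meets \<open>V\<close> in a nonempty open set, which by hypothesis
  contains a point of dimension \<open>n\<close>; hence \<open>n \<le> n\<^sub>x \<le> n\<close>. So the dimension is
  constantly \<open>n\<close> on \<open>V\<close>, and \<open>V\<close> itself witnesses structural regularity.\<close>

lemma topspace_dtop: "topspace (dtop S F) = S"
  unfolding dtop_def topology_generated_by_topspace by auto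

lemma locally_embeds_struct_dim:
  assumes "locally_embeds S F x m"
  shows "locally_embeds S F x (struct_dim S F x)"
  unfolding struct_dim_def using assms by (rule LeastI)

lemma struct_dim_upper_semicontinuous:
  assumes "locally_embeds S F x m"
  obtains U where "openin (dtop S F) U" "x \<in> U" "\<forall>y\<in>U. struct_dim S F y \<le> struct_dim S F x"
proof -
  obtain U A phi where U: "openin (dtop S F) U" "x \<in> U" "A \<subseteq> Rn (struct_dim S F x)"
    "diffeo U (sub_fns S F U) A (sub_fns (Rn (struct_dim S F x)) (Rn_fns (struct_dim S F x)) A) phi"
    using locally_embeds_struct_dim[OF assms] unfolding locally_embeds_def by blast
  have "locally_embeds S F y (struct_dim S F x)" if "y \<in> U" for y
    unfolding locally_embeds_def using U that by blast
  then have "\<forall>y\<in>U. struct_dim S F y \<le> struct_dim S F x"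
    unfolding struct_dim_def by (blast intro: Least_le)
  with U(1,2) show thesis by (rule that)
qed

lemma struct_regular_if_struct_dim_constant:
  assumes "openin (dtop S F) V" "x \<in> V" "\<forall>y\<in>V. struct_dim S F y = c"
  shows "struct_regular S F x"
  unfolding struct_regular_def using assms by auto

theorem mainTheorem6:
  fixes S :: "'a set" and F :: "('a \<Rightarrow> real) set" and V :: "'a set" and n :: nat
  assumes "subcartesian S F"
    and "openin (dtop S F) V"
    and "finite (struct_dim S F ` V)"
    and "n = Max (struct_dim S F ` V)"
    and "\<forall>W. openin (dtop S F) W \<and> W \<noteq> {} \<and> W \<subseteq> V \<longrightarrow> (\<exists>x\<in>W. struct_dim S F x = n)"
  shows "\<forall>x\<in>V. struct_regular S F x"
proof -
  have dim_V: "struct_dim S F x = n" if "x \<in> V" for x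
  proof -
    have "x \<in> S" using openin_subset[OF assms(2)] that by (auto simp: topspace_dtop)
    then obtain m where "locally_embeds S F x m" using assms(1) unfolding subcartesian_def by blast
    then obtain U where U: "openin (dtop S F) U" "x \<in> U"
      and le: "\<forall>y\<in>U. struct_dim S F y \<le> struct_dim S F x"
      by (rule struct_dim_upper_semicontinuous)
    have "openin (dtop S F) (U \<inter> V)" "U \<inter> V \<noteq> {}"
      using U assms(2) that by auto
    then obtain y where "y \<in> U" "struct_dim S F y = n" using assms(5) by blast
    then have "n \<le> struct_dim S F x" using le by auto
    moreover have "struct_dim S F x \<le> n" using assms(3,4) that by simp
    ultimately show ?thesis by simp
  qed
  then show ?thesis using assms(2) by (blast intro: struct_regular_if_struct_dim_constant)
qed

end
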